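(* For all integers $n\ge 3$ and $k\ge 1$, $\mathrm{mur}(kC_n)=kn-2k-1$, where $kC_n$ is the vertex-disjoint union of $k$ copies of the cycle $C_n$ on $n$ vertices.
   Context: For a finite simple undirected graph $G$ on vertices $v_1,\dots,v_n$, let $A_G$ be its $(0,1)$-adjacency matrix, $D_G=\mathrm{diag}(d_1,\dots,d_n)$ with $d_i$ the degree of $v_i$, $I$ the $n\times n$ identity matrix and $J$ the $n\times n$ all-ones matrix. A universal adjacency matrix of $G$ is any matrix $\alpha A_G+\beta I+\gamma J+\delta D_G$ with real scalars $\alpha,\beta,\gamma,\delta$ and $\alpha\neq 0$. The minimum universal rank $\mathrm{mur}(G)$ is the minimum rank over all universal adjacency matrices of $G$. *)

theory Defs
  imports "Jordan_Normal_Form.DL_Rank"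
begin

text \<open>A finite simple graph on vertex set {0..<N} given by a symmetric, irreflexive
adjacency predicate (only its values on {0..<N} matter).\<close>

definition adjacency_mat :: "nat \<Rightarrow> (nat \<Rightarrow> nat \<Rightarrow> bool) \<Rightarrow> real mat" where
  "adjacency_mat N adj = mat N N (\<lambda>(i, j). if adj i j then 1 else 0)"

definition degree :: "nat \<Rightarrow> (nat \<Rightarrow> nat \<Rightarrow> bool) \<Rightarrow> nat \<Rightarrow> nat" where
  "degree N adj i = card {j. j < N \<and> adj i j}"

definition degree_mat :: "nat \<Rightarrow> (nat \<Rightarrow> nat \<Rightarrow> bool) \<Rightarrow> real mat" where
  "degree_mat N adj = mat N N (\<lambda>(i, j). if i = j then real (degree N adj i) else 0)"

definition all_ones_mat :: "nat \<Rightarrow> real mat" where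
  "all_ones_mat N = mat N N (\<lambda>_. 1)"

definition universal_adj_mat ::
  "nat \<Rightarrow> (nat \<Rightarrow> nat \<Rightarrow> bool) \<Rightarrow> real \<Rightarrow> real \<Rightarrow> real \<Rightarrow> real \<Rightarrow> real mat" where
  "universal_adj_mat N adj \<alpha> \<beta> \<gamma> \<delta> =
     \<alpha> \<cdot>\<^sub>m adjacency_mat N adj + \<beta> \<cdot>\<^sub>m 1\<^sub>m N + \<gamma> \<cdot>\<^sub>m all_ones_mat N + \<delta> \<cdot>\<^sub>m degree_mat N adj"

definition mur :: "nat \<Rightarrow> (nat \<Rightarrow> nat \<Rightarrow> bool) \<Rightarrow> nat" where
  "mur N adj = (LEAST r. \<exists>\<alpha> \<beta> \<gamma> \<delta>. \<alpha> \<noteq> 0 \<and>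
       vec_space.rank N (universal_adj_mat N adj \<alpha> \<beta> \<gamma> \<delta>) = r)"

text \<open>kC_n: vertex i < k*n lies in copy i div n at position i mod n of a cycle C_n.\<close>
definition kCn_adj :: "nat \<Rightarrow> nat \<Rightarrow> nat \<Rightarrow> nat \<Rightarrow> bool" where
  "kCn_adj k n i j \<longleftrightarrow> i < k * n \<and> j < k * n \<and> i div n = j div n \<and>
     (j mod n = (i mod n + 1) mod n \<or> i mod n = (j mod n + 1) mod n)"

end

theory Submission
  imports Defs
begin

text \<open>Every universal adjacency matrix of the 2-regular graph \<open>kC\<^sub>n\<close> has the form
\<open>\<alpha>A + \<beta>'I + \<gamma>J\<close>. Deleting two consecutive vertices of each cycle leaves paths, so \<open>\<alpha>A + \<beta>'I\<close>
contains a triangular \<open>k(n-2)\<close>-square submatrix with \<open>\<alpha>\<close> on its diagonal; since \<open>\<gamma>J\<close> has rank at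
most one, every universal adjacency matrix has rank at least \<open>kn - 2k - 1\<close>. Conversely, with
\<open>\<lambda> = 2 cos (2\<pi>/n)\<close>, the matrix \<open>A - \<lambda>I + ((\<lambda> - 2)/(kn))J\<close> annihilates the all-ones vector and,
on each cycle, the two sine waves of frequency \<open>2\<pi>/n\<close> (eigenvectors of \<open>A\<close> for \<open>\<lambda>\<close> with zero
sum). These \<open>2k + 1\<close> vectors are independent, so this matrix has rank at most \<open>kn - 2k - 1\<close>.\<close>

lemma (in vec_space) rank_le_of_cols_in_span:
  assumes A: "A \<in> carrier_mat n nc" and P: "P \<in> carrier_mat n m"
    and sub: "set (cols A) \<subseteq> span (set (cols P))"
  shows "rank A \<le> m"
proof -
  have Pc: "set (cols P) \<subseteq> carrier_vec n" using P cols_dim by blast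
  have vs: "vectorspace class_ring (vs (span (set (cols P))))"
    using span_is_subspace[THEN subspace_is_vs, OF Pc] by auto
  have sm: "submodule class_ring (span (set (cols P))) V" using span_is_submodule Pc by simp
  have ss: "subspace class_ring (span (set (cols A))) (vs (span (set (cols P))))"
    using vectorspace.span_is_subspace[OF vs, of "set (cols A)", unfolded span_li_not_depend(1)[OF sub sm]]
      sub by auto
  have fd: "vectorspace.fin_dim class_ring (vs (span (set (cols P))))"
    "vectorspace.fin_dim class_ring (vs (span (set (cols P)))\<lparr>carrier := span (set (cols A))\<rparr>)"
    using fin_dim_span_cols A P by auto
  have "rank A \<le> rank P" unfolding rank_def using vectorspace.subspace_dim[OF vs ss fd] by simp
  also have "\<dots> \<le> m" using rank_le_nc P by auto
  finally show ?thesis .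
qed

lemma (in vec_space) mult_mat_vec_in_span_cols:
  assumes A: "A \<in> carrier_mat n n" and v: "v \<in> carrier_vec n"
    and F: "distinct F" "set F \<subseteq> {..<n}" and supp: "\<And>j. j < n \<Longrightarrow> j \<notin> set F \<Longrightarrow> v $ j = 0"
  shows "A *\<^sub>v v \<in> span (set (map (col A) F))"
proof -
  have W: "set (map (col A) F) \<subseteq> carrier_vec n" using A F(2) by auto
  have eq: "A *\<^sub>v v = sumlist (map (\<lambda>j. v $ j \<cdot>\<^sub>v col A j) F)"
  proof (rule eq_vecI)
    show d: "dim_vec (A *\<^sub>v v) = dim_vec (sumlist (map (\<lambda>j. v $ j \<cdot>\<^sub>v col A j) F))"
      using A by (subst dim_sumlist, auto)
    fix i assume "i < dim_vec (sumlist (map (\<lambda>j. v $ j \<cdot>\<^sub>v col A j) F))"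
    then have i: "i < n" using d A by auto
    have "sumlist (map (\<lambda>j. v $ j \<cdot>\<^sub>v col A j) F) $ i
       = (\<Sum>t\<in>{0..<length F}. v $ (F ! t) * A $$ (i, F ! t))"
    proof -
      have "\<And>t. t < length F \<Longrightarrow> F ! t < n" using F(2) nth_mem by blast
      then show ?thesis using i A F(2) by (subst sumlist_nth, auto intro!: sum.cong)
    qed
    also have "\<dots> = (\<Sum>j\<in>set F. v $ j * A $$ (i, j))"
      using F(1) by (simp add: sum_list_sum_nth atLeast0LessThan sum_list_distinct_conv_sum_set[symmetric])
    also have "\<dots> = (\<Sum>j\<in>{0..<n}. v $ j * A $$ (i, j))"
      by (rule sum.mono_neutral_left) (use F supp in auto)
    also have "\<dots> = (A *\<^sub>v v) $ i"
      using A v i by (auto simp: scalar_prod_def mult.commute intro!: sum.cong)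
    finally show "(A *\<^sub>v v) $ i = sumlist (map (\<lambda>j. v $ j \<cdot>\<^sub>v col A j) F) $ i" by simp
  qed
  show ?thesis unfolding eq
  proof (rule sumlist_in_span[OF W])
    fix x assume "x \<in> set (map (\<lambda>j. v $ j \<cdot>\<^sub>v col A j) F)"
    then obtain j where j: "j \<in> set F" "x = v $ j \<cdot>\<^sub>v col A j" by auto
    have "col A j \<in> span (set (map (col A) F))" using j(1) span_mem[OF W] by auto
    then show "x \<in> span (set (map (col A) F))" using j(2) smult_in_span[OF W] by auto
  qed
qed

text \<open>If the kernel of \<open>A\<close> separates the coordinates in \<open>E\<close>, the columns indexed by \<open>E\<close> lie in
the span of the remaining ones.\<close>

lemma (in vec_space) rank_le_of_kernel_indicators:
  assumes A: "A \<in> carrier_mat n n" and E: "E \<subseteq> {..<n}"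
    and ind: "\<And>c. c \<in> E \<Longrightarrow>
      \<exists>w \<in> carrier_vec n. A *\<^sub>v w = 0\<^sub>v n \<and> (\<forall>c'\<in>E. w $ c' = (if c' = c then 1 else 0))"
  shows "rank A \<le> n - card E"
proof -
  define F where "F = filter (\<lambda>j. j \<notin> E) [0..<n]"
  have F: "distinct F" "set F = {..<n} - E" unfolding F_def by auto
  have len_F: "length F = n - card E"
    using distinct_card[OF F(1)] F(2) card_Diff_subset[OF finite_subset[OF E] E] by simp
  define P where "P = mat_of_cols n (map (col A) F)"
  have W: "set (map (col A) F) \<subseteq> carrier_vec n" using A by (auto simp: carrier_vecI)
  have P: "P \<in> carrier_mat n (n - card E)"
    unfolding P_def using mat_of_cols_carrier(1)[of n "map (col A) F"] by (simp add: len_F)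
  have cols_P: "set (cols P) = set (map (col A) F)"
    unfolding P_def by (simp add: cols_mat_of_cols[OF W])
  have col_in_span: "col A c \<in> span (set (map (col A) F))" if c: "c < n" for c
  proof (cases "c \<in> E")
    case False
    then show ?thesis using c F(2) W span_mem by auto
  next
    case True
    then obtain w where w: "w \<in> carrier_vec n" "A *\<^sub>v w = 0\<^sub>v n"
      and w_E: "\<forall>c'\<in>E. w $ c' = (if c' = c then 1 else 0)"
      using ind by blast
    define u where "u = unit_vec n c - w"
    have u: "u \<in> carrier_vec n" unfolding u_def using w by auto
    have "A *\<^sub>v u = A *\<^sub>v unit_vec n c - A *\<^sub>v w"
      unfolding u_def using A w by (subst mult_minus_distrib_mat_vec, auto)
    also have "\<dots> = col A c"
      using A c w by (auto intro!: eq_vecI simp: scalar_prod_right_unit)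
    finally have "col A c = A *\<^sub>v u" by simp
    moreover have "u $ j = 0" if "j < n" "j \<notin> set F" for j
      using that F(2) w_E True w(1) by (auto simp: u_def unit_vec_def)
    ultimately show ?thesis
      using mult_mat_vec_in_span_cols[OF A u F(1)] F(2) by auto
  qed
  have "set (cols A) \<subseteq> span (set (cols P))"
    using A col_in_span unfolding cols_P by (auto simp: in_set_conv_nth)
  then show ?thesis using rank_le_of_cols_in_span[OF A P] by simp
qed

lemma (in vec_space) rank_ge_of_subset_cols:
  assumes B: "B \<in> carrier_mat n nb" and X: "X \<in> carrier_mat n m"
    and sub: "set (cols X) \<subseteq> set (cols B)" and dist: "distinct (cols X)"
    and ker: "\<And>v. v \<in> carrier_vec m \<Longrightarrow> X *\<^sub>v v = 0\<^sub>v n \<Longrightarrow> v = 0\<^sub>v m"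
  shows "m \<le> rank B"
proof -
  have "lin_indpt (set (cols X))"
  proof
    assume "lin_dep (set (cols X))"
    then obtain v where "v \<in> carrier_vec m" "v \<noteq> 0\<^sub>v m" "X *\<^sub>v v = 0\<^sub>v n"
      using lin_depE[OF X _ dist] by blast
    then show False using ker by auto
  qed
  then have "card (set (cols X)) \<le> rank B" by (rule rank_ge_card_indpt[OF B sub])
  then show ?thesis using distinct_card[OF dist] X by simp
qed

lemma (in vec_space) rank_ge_of_triangular_submatrix:
  assumes B: "B \<in> carrier_mat n nb"
    and idx: "\<And>j. j < m \<Longrightarrow> r j < n \<and> c j < nb"
    and diag: "\<And>j. j < m \<Longrightarrow> B $$ (r j, c j) \<noteq> 0"
    and above: "\<And>j j'. j < j' \<Longrightarrow> j' < m \<Longrightarrow> B $$ (r j, c j') = 0"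
  shows "m \<le> rank B"
proof -
  define X where "X = mat n m (\<lambda>(i, j). B $$ (i, c j))"
  have X: "X \<in> carrier_mat n m" unfolding X_def by simp
  have X_entry: "X $$ (r j, j') = B $$ (r j, c j')" if "j < m" "j' < m" for j j'
    unfolding X_def using that idx by simp
  have "set (cols X) \<subseteq> set (cols B)"
  proof
    fix x assume "x \<in> set (cols X)"
    then obtain j where j: "j < m" "x = col X j" using X by (auto simp: in_set_conv_nth)
    then have "x = col B (c j)" unfolding X_def using idx B by (auto intro!: eq_vecI)
    moreover have "col B (c j) \<in> set (cols B)"
      using idx[OF j(1)] B by (metis cols_length cols_nth carrier_matD(2) nth_mem)
    ultimately show "x \<in> set (cols B)" by simp
  qed
  moreover have "distinct (cols X)"
  proof -
    have "col X j \<noteq> col X j'" if "j < j'" "j' < m" for j j'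
    proof
      assume "col X j = col X j'"
      then have "X $$ (r j, j) = X $$ (r j, j')" using that X idx[of j] by (metis col_def index_vec carrier_matD(1) less_trans)
      then show False using X_entry diag above that by auto
    qed
    then show ?thesis using X
      by (auto simp: distinct_conv_nth nat_neq_iff) (metis)
  qed
  moreover have "v = 0\<^sub>v m" if v: "v \<in> carrier_vec m" and Xv: "X *\<^sub>v v = 0\<^sub>v n" for v
  proof -
    have "v $ j = 0" if "j < m" for j
      using that
    proof (induction j rule: less_induct)
      case (less j)
      have "0 = (X *\<^sub>v v) $ r j" using Xv idx[OF less.prems] by simp
      also have "\<dots> = (\<Sum>j'<m. X $$ (r j, j') * v $ j')"
        using X v idx[OF less.prems] by (auto simp: scalar_prod_def atLeast0LessThan intro!: sum.cong)
      also have "\<dots> = (\<Sum>j'<m. if j' = j then B $$ (r j, c j) * v $ j else 0)"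
        using less X_entry above by (intro sum.cong) (auto simp: nat_neq_iff)
      also have "\<dots> = B $$ (r j, c j) * v $ j" using less.prems by simp
      finally show ?case using diag[OF less.prems] by simp
    qed
    then show ?thesis using v by (intro eq_vecI) auto
  qed
  ultimately show ?thesis by (rule rank_ge_of_subset_cols[OF B X])
qed

lemma universal_adj_mat_carrier: "universal_adj_mat N adj \<alpha> \<beta> \<gamma> \<delta> \<in> carrier_mat N N"
  unfolding universal_adj_mat_def adjacency_mat_def all_ones_mat_def degree_mat_def by auto

lemma universal_adj_mat_index:
  assumes "i < N" "j < N"
  shows "universal_adj_mat N adj \<alpha> \<beta> \<gamma> \<delta> $$ (i, j) = \<alpha> * (if adj i j then 1 else 0)
     + \<beta> * (if i = j then 1 else 0) + \<gamma> + \<delta> * (if i = j then real (degree N adj i) else 0)"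
  unfolding universal_adj_mat_def adjacency_mat_def all_ones_mat_def degree_mat_def using assms by auto

lemma block_div_mod:
  assumes "r < (n::nat)"
  shows "(b * n + r) div n = b" "(b * n + r) mod n = r"
  using assms by simp_all

lemma block_less: "b < k \<Longrightarrow> r < n \<Longrightarrow> b * n + r < k * (n::nat)"
  using mult_le_mono1[of "Suc b" k n] by simp

definition cycle_succ :: "nat \<Rightarrow> nat \<Rightarrow> nat" where
  "cycle_succ n i = i div n * n + (if i mod n + 1 = n then 0 else i mod n + 1)"

definition cycle_pred :: "nat \<Rightarrow> nat \<Rightarrow> nat" where
  "cycle_pred n i = i div n * n + (if i mod n = 0 then n - 1 else i mod n - 1)"

lemma Suc_mod_eq_if: "p < (n::nat) \<Longrightarrow> (p + 1) mod n = (if p + 1 = n then 0 else p + 1)"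
  using mod_less[of "p + 1" n] by (cases "p + 1 = n") auto

lemma
  assumes "n > 0"
  shows cycle_succ_div: "cycle_succ n i div n = i div n"
    and cycle_succ_mod: "cycle_succ n i mod n = (if i mod n + 1 = n then 0 else i mod n + 1)"
proof -
  have "(if i mod n + 1 = n then 0 else i mod n + 1) < n"
    using assms mod_less_divisor[OF assms, of i] by auto
  then show "cycle_succ n i div n = i div n" "cycle_succ n i mod n = (if i mod n + 1 = n then 0 else i mod n + 1)"
    by (simp_all add: cycle_succ_def)
qed

lemma
  assumes "n > 0"
  shows cycle_pred_div: "cycle_pred n i div n = i div n"
    and cycle_pred_mod: "cycle_pred n i mod n = (if i mod n = 0 then n - 1 else i mod n - 1)"
proof -
  have "(if i mod n = 0 then n - 1 else i mod n - 1) < n"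
    using assms mod_less_divisor[OF assms, of i] by auto
  then show "cycle_pred n i div n = i div n" "cycle_pred n i mod n = (if i mod n = 0 then n - 1 else i mod n - 1)"
    by (simp_all add: cycle_pred_def)
qed

lemma eq_cycle_succ_iff:
  assumes "n > 0"
  shows "j = cycle_succ n i \<longleftrightarrow> j div n = i div n \<and> j mod n = (i mod n + 1) mod n"
  using cycle_succ_div[OF assms] cycle_succ_mod[OF assms] Suc_mod_eq_if[OF mod_less_divisor[OF assms]]
    div_mult_mod_eq[of j n] div_mult_mod_eq[of "cycle_succ n i" n]
  by metis

lemma cycle_succ_mod_eq:
  assumes "n > 0"
  shows "cycle_succ n i mod n = (i mod n + 1) mod n"
proof -
  have "i mod n < n" using assms by simp
  then show ?thesis using Suc_mod_eq_if[of "i mod n" n] assms by (simp add: cycle_succ_mod)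
qed

lemma cycle_pred_mod_eq:
  assumes "n > 0"
  shows "cycle_pred n i mod n = (i mod n + n - 1) mod n"
proof (cases "i mod n = 0")
  case False
  then have "i mod n + n - 1 = (i mod n - 1) + n" by simp
  then have "(i mod n + n - 1) mod n = i mod n - 1"
    using mod_less_divisor[OF assms, of i] by (metis mod_add_self2 mod_less less_imp_diff_less)
  then show ?thesis using assms False by (simp add: cycle_pred_mod)
qed (use assms in \<open>simp add: cycle_pred_mod\<close>)

lemma cycle_pred_succ:
  assumes "n > 0"
  shows "cycle_pred n (cycle_succ n i) = i"
proof -
  have "cycle_pred n (cycle_succ n i) div n = i div n" "cycle_pred n (cycle_succ n i) mod n = i mod n"
    using assms mod_less_divisor[OF assms, of i]
    by (auto simp: cycle_pred_div cycle_pred_mod cycle_succ_div cycle_succ_mod)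
  then show ?thesis by (metis div_mult_mod_eq)
qed

lemma cycle_succ_pred:
  assumes "n > 0"
  shows "cycle_succ n (cycle_pred n i) = i"
proof -
  have "cycle_succ n (cycle_pred n i) div n = i div n" "cycle_succ n (cycle_pred n i) mod n = i mod n"
    using assms mod_less_divisor[OF assms, of i]
    by (auto simp: cycle_pred_div cycle_pred_mod cycle_succ_div cycle_succ_mod)
  then show ?thesis by (metis div_mult_mod_eq)
qed

lemma cycle_succ_less: "n > 0 \<Longrightarrow> i < k * n \<Longrightarrow> cycle_succ n i < k * n"
  by (simp add: cycle_succ_div flip: div_less_iff_less_mult)

lemma cycle_pred_less: "n > 0 \<Longrightarrow> i < k * n \<Longrightarrow> cycle_pred n i < k * n"
  by (simp add: cycle_pred_div flip: div_less_iff_less_mult)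

lemma cycle_succ_neq_pred:
  assumes "n \<ge> 3"
  shows "cycle_succ n i \<noteq> cycle_pred n i"
proof -
  have "i mod n < n" using assms by simp
  then have "(if i mod n + 1 = n then 0 else i mod n + 1) \<noteq> (if i mod n = 0 then n - 1 else i mod n - 1)"
    using assms by auto
  then show ?thesis by (simp add: cycle_succ_def cycle_pred_def)
qed

lemma kCn_adj_iff:
  assumes "n > 0" "i < k * n" "j < k * n"
  shows "kCn_adj k n i j \<longleftrightarrow> j = cycle_succ n i \<or> j = cycle_pred n i"
proof -
  have "j = cycle_pred n i \<longleftrightarrow> i = cycle_succ n j"
    using assms(1) cycle_pred_succ cycle_succ_pred by metis
  then show ?thesis
    using assms by (auto simp: kCn_adj_def eq_cycle_succ_iff)
qed

lemma kCn_adj_upward: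
  assumes "n > 0" "kCn_adj k n i j" "i + 1 < j"
  shows "j mod n = n - 1"
proof -
  have "j = cycle_succ n i \<or> j = cycle_pred n i"
    using assms kCn_adj_iff[OF assms(1)] by (auto simp: kCn_adj_def)
  moreover have "cycle_succ n i \<le> i + 1" "cycle_pred n i \<le> i \<or> i mod n = 0"
    using mod_less_eq_dividend[of i n]
    by (auto simp: cycle_succ_def cycle_pred_def simp flip: minus_mod_eq_div_mult)
  ultimately have "j = cycle_pred n i" "i mod n = 0" using assms(3) by auto
  then show ?thesis using assms(1) by (simp add: cycle_pred_mod)
qed

lemma sum_kCn_adj:
  assumes n: "n \<ge> 3" and i: "i < k * n"
  shows "(\<Sum>j<k*n. (if kCn_adj k n i j then 1 else 0) * f j) = f (cycle_succ n i) + (f (cycle_pred n i) :: real)"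
proof -
  have n0: "n > 0" using n by simp
  have nbs: "{cycle_succ n i, cycle_pred n i} \<subseteq> {..<k*n}"
    using cycle_succ_less[OF n0 i] cycle_pred_less[OF n0 i] by auto
  have "(\<Sum>j<k*n. (if kCn_adj k n i j then 1 else 0) * f j)
      = (\<Sum>j<k*n. if j \<in> {cycle_succ n i, cycle_pred n i} then f j else 0)"
    by (rule sum.cong) (auto simp: kCn_adj_iff[OF n0 i])
  also have "\<dots> = sum f ({..<k*n} \<inter> {cycle_succ n i, cycle_pred n i})"
    by (simp add: sum.inter_restrict)
  also have "{..<k*n} \<inter> {cycle_succ n i, cycle_pred n i} = {cycle_succ n i, cycle_pred n i}"
    using nbs by auto
  also have "sum f {cycle_succ n i, cycle_pred n i} = f (cycle_succ n i) + f (cycle_pred n i)"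
    using cycle_succ_neq_pred[OF n] by simp
  finally show ?thesis .
qed

definition cycle_wave :: "nat \<Rightarrow> real \<Rightarrow> nat \<Rightarrow> real" where
  "cycle_wave n \<phi> p = sin (2 * pi / real n * real p + \<phi>)"

lemma sin_plus_2pi_nat: "sin (x + 2 * pi * real (q::nat)) = sin x"
proof (induction q)
  case (Suc q)
  have "sin (x + 2 * pi * real (Suc q)) = sin ((x + 2 * pi * real q) + 2 * pi)"
    by (simp add: algebra_simps)
  then show ?case using Suc by (simp only: sin_periodic)
qed simp

lemma cycle_wave_mod:
  assumes "n > 0"
  shows "cycle_wave n \<phi> (m mod n) = cycle_wave n \<phi> m"
proof -
  have "real m = real (m mod n) + real n * real (m div n)"
    by (metis of_nat_add of_nat_mult mod_mult_div_eq add.commute)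
  then have "2 * pi / real n * real m + \<phi> = (2 * pi / real n * real (m mod n) + \<phi>) + 2 * pi * real (m div n)"
    using assms by (simp add: field_simps)
  then have "sin (2 * pi / real n * real m + \<phi>)
      = sin ((2 * pi / real n * real (m mod n) + \<phi>) + 2 * pi * real (m div n))"
    by (rule arg_cong)
  then show ?thesis unfolding cycle_wave_def sin_plus_2pi_nat by simp
qed

lemma cycle_wave_neighbours:
  assumes "n > 0" "p < n"
  shows "cycle_wave n \<phi> ((p + 1) mod n) + cycle_wave n \<phi> ((p + n - 1) mod n)
       = 2 * cos (2 * pi / real n) * cycle_wave n \<phi> p"
proof -
  define t where "t = 2 * pi / real n"
  have "t * real (p + 1) + \<phi> = (t * real p + \<phi>) + t" by (simp add: algebra_simps)
  then have succ: "cycle_wave n \<phi> ((p + 1) mod n) = sin ((t * real p + \<phi>) + t)"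
    using cycle_wave_mod[OF assms(1)] unfolding cycle_wave_def t_def by metis
  have "real (p + n - 1) = real p + real n - 1" using assms by auto
  then have "t * real (p + n - 1) + \<phi> = ((t * real p + \<phi>) - t) + 2 * pi * real (1::nat)"
    using assms by (simp add: t_def field_simps)
  then have pred: "cycle_wave n \<phi> ((p + n - 1) mod n) = sin ((t * real p + \<phi>) - t)"
    using cycle_wave_mod[OF assms(1)] sin_plus_2pi_nat unfolding cycle_wave_def t_def by metis
  show ?thesis unfolding succ pred by (simp add: cycle_wave_def sin_add sin_diff flip: t_def)
qed

lemma cos_2pi_div_less_1: "n \<ge> 2 \<Longrightarrow> cos (2 * pi / real n) < 1"
  using cos_monotone_0_pi[of 0 "2 * pi / real n"] by (simp add: field_simps)

lemma sin_2pi_div_pos: "n \<ge> 3 \<Longrightarrow> sin (2 * pi / real n) > 0"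
  by (rule sin_gt_zero) (simp_all add: field_simps)

lemma sum_lessThan_shift_periodic:
  assumes "f n = f 0"
  shows "(\<Sum>p<n. f (Suc p)) = (\<Sum>p<n. f p :: 'a::cancel_comm_monoid_add)"
  using sum.lessThan_Suc_shift[of f n] sum.lessThan_Suc[of f n] assms by (simp add: add.commute)

text \<open>Summing the three-term recurrence of the waves over a period gives \<open>2S = 2 cos(2\<pi>/n) S\<close>.\<close>

lemma sum_cycle_wave:
  assumes n: "n \<ge> 2"
  shows "(\<Sum>p<n. cycle_wave n \<phi> p) = 0"
proof -
  have n0: "n > 0" using n by simp
  let ?w = "cycle_wave n \<phi>"
  define S where "S = (\<Sum>p<n. ?w p)"
  have wave_mod: "?w (m mod n) = ?w m" for m by (rule cycle_wave_mod[OF n0])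
  have succ_sum: "(\<Sum>p<n. ?w ((p + 1) mod n)) = S"
    using sum_lessThan_shift_periodic[of ?w n] wave_mod[of n] by (simp add: S_def wave_mod)
  have "n + n - 1 = (n - 1) + n" using n0 by simp
  then have "?w (n + n - 1) = ?w (n - 1)" using wave_mod by (metis mod_add_self2)
  then have "(\<Sum>p<n. ?w ((p + n - 1) mod n)) = (\<Sum>p<n. ?w ((Suc p + n - 1) mod n))"
    using sum_lessThan_shift_periodic[of "\<lambda>p. ?w ((p + n - 1) mod n)" n] by (simp add: wave_mod)
  also have "\<dots> = S" unfolding S_def using wave_mod by simp
  finally have pred_sum: "(\<Sum>p<n. ?w ((p + n - 1) mod n)) = S" .
  have "2 * S = (\<Sum>p<n. ?w ((p + 1) mod n) + ?w ((p + n - 1) mod n))"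
    unfolding sum.distrib succ_sum pred_sum by simp
  also have "\<dots> = (\<Sum>p<n. 2 * cos (2 * pi / real n) * ?w p)"
    by (intro sum.cong refl cycle_wave_neighbours[OF n0]) simp
  also have "\<dots> = 2 * cos (2 * pi / real n) * S" by (simp add: S_def sum_distrib_left)
  finally have "2 * S = 2 * cos (2 * pi / real n) * S" .
  then have "(1 - cos (2 * pi / real n)) * S = 0" by (simp add: algebra_simps)
  then show ?thesis using cos_2pi_div_less_1[OF n] by (simp add: S_def)
qed

lemma sum_lessThan_mult_div_mod:
  assumes "(n::nat) > 0"
  shows "(\<Sum>i<k*n. g (i div n) * h (i mod n)) = (\<Sum>b<k. g b) * (\<Sum>p<n. h p :: 'a::comm_semiring_0)"
proof -
  have "(\<Sum>i\<in>{b*n..<b*n+n}. g (i div n) * h (i mod n)) = (\<Sum>p<n. g b * h p)" for b :: nat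
    using sum.shift_bounds_nat_ivl[of "\<lambda>i. g (i div n) * h (i mod n)" 0 "b*n" n] assms
    by (simp add: atLeast0LessThan add.commute)
  then show ?thesis by (simp add: sum_product flip: sum.nat_group)
qed

definition cycle_kernel_vec :: "nat \<Rightarrow> real \<Rightarrow> (nat \<Rightarrow> real) \<Rightarrow> (nat \<Rightarrow> real) \<Rightarrow> nat \<Rightarrow> real" where
  "cycle_kernel_vec n a x y i =
     a + x (i div n) * cycle_wave n 0 (i mod n) + y (i div n) * cycle_wave n (- (2 * pi / real n)) (i mod n)"

lemma sum_cycle_kernel_vec:
  assumes "n \<ge> 2"
  shows "(\<Sum>i<k*n. cycle_kernel_vec n a x y i) = real (k*n) * a"
proof -
  have n0: "n > 0" using assms by simp
  have "(\<Sum>i<k*n. cycle_kernel_vec n a x y i) = (\<Sum>i<k*n. a)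
      + (\<Sum>i<k*n. x (i div n) * cycle_wave n 0 (i mod n))
      + (\<Sum>i<k*n. y (i div n) * cycle_wave n (- (2 * pi / real n)) (i mod n))"
    unfolding cycle_kernel_vec_def by (simp add: sum.distrib)
  then show ?thesis by (simp add: sum_lessThan_mult_div_mod[OF n0] sum_cycle_wave[OF assms])
qed

lemma cycle_kernel_vec_neighbours:
  assumes "n > 0"
  shows "cycle_kernel_vec n a x y (cycle_succ n i) + cycle_kernel_vec n a x y (cycle_pred n i)
       = 2 * cos (2 * pi / real n) * cycle_kernel_vec n a x y i + (2 - 2 * cos (2 * pi / real n)) * a"
proof -
  let ?c = "cos (2 * pi / real n)" and ?b = "i div n" and ?p = "i mod n"
  let ?w0 = "cycle_wave n 0" and ?w1 = "cycle_wave n (- (2 * pi / real n))"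
  have p: "?p < n" using assms by simp
  have "cycle_kernel_vec n a x y (cycle_succ n i) + cycle_kernel_vec n a x y (cycle_pred n i)
      = 2 * a + x ?b * (?w0 ((?p + 1) mod n) + ?w0 ((?p + n - 1) mod n))
          + y ?b * (?w1 ((?p + 1) mod n) + ?w1 ((?p + n - 1) mod n))"
    using assms by (simp add: cycle_kernel_vec_def cycle_succ_div cycle_pred_div cycle_succ_mod_eq
        cycle_pred_mod_eq algebra_simps)
  also have "\<dots> = 2 * a + x ?b * (2 * ?c * ?w0 ?p) + y ?b * (2 * ?c * ?w1 ?p)"
    by (simp only: cycle_wave_neighbours[OF assms p])
  finally show ?thesis by (simp add: cycle_kernel_vec_def algebra_simps)
qed

definition kCn_witness_mat :: "nat \<Rightarrow> nat \<Rightarrow> real mat" where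
  "kCn_witness_mat k n = universal_adj_mat (k*n) (kCn_adj k n)
     1 (- 2 * cos (2 * pi / real n)) ((2 * cos (2 * pi / real n) - 2) / real (k*n)) 0"

lemma kCn_witness_mat_kernel:
  assumes n: "n \<ge> 3"
  shows "kCn_witness_mat k n *\<^sub>v vec (k*n) (cycle_kernel_vec n a x y) = 0\<^sub>v (k*n)"
proof (rule eq_vecI)
  let ?M = "kCn_witness_mat k n" and ?f = "cycle_kernel_vec n a x y"
  let ?c = "cos (2 * pi / real n)"
  let ?g = "(2 * ?c - 2) / real (k*n)"
  have M: "?M \<in> carrier_mat (k*n) (k*n)"
    unfolding kCn_witness_mat_def by (rule universal_adj_mat_carrier)
  then show "dim_vec (?M *\<^sub>v vec (k*n) ?f) = dim_vec (0\<^sub>v (k*n) :: real vec)" by simp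
  fix i assume "i < dim_vec (0\<^sub>v (k*n) :: real vec)"
  then have i: "i < k*n" by simp
  then have "k*n > 0" by linarith
  then have k0: "k > 0" and n0: "n > 0" by simp_all
  have "(?M *\<^sub>v vec (k*n) ?f) $ i = (\<Sum>j<k*n. ?M $$ (i, j) * ?f j)"
    using M i by (auto simp: scalar_prod_def atLeast0LessThan intro!: sum.cong)
  also have "\<dots> = (\<Sum>j<k*n. (if kCn_adj k n i j then 1 else 0) * ?f j
      + (if i = j then - 2 * ?c * ?f j else 0) + ?g * ?f j)"
    using i by (intro sum.cong) (auto simp: kCn_witness_mat_def universal_adj_mat_index algebra_simps)
  also have "\<dots> = (\<Sum>j<k*n. (if kCn_adj k n i j then 1 else 0) * ?f j)
      + (\<Sum>j<k*n. if i = j then - 2 * ?c * ?f j else 0) + ?g * (\<Sum>j<k*n. ?f j)"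
    by (simp only: sum.distrib sum_distrib_left)
  also have "\<dots> = ?f (cycle_succ n i) + ?f (cycle_pred n i) - 2 * ?c * ?f i + ?g * (real (k*n) * a)"
    using i n by (simp add: sum_kCn_adj[OF n i] sum_cycle_kernel_vec)
  also have "\<dots> = (2 - 2 * ?c) * a + ?g * (real (k*n) * a)"
    using cycle_kernel_vec_neighbours[OF n0, of a x y i] by linarith
  also have "\<dots> = 0"
    using k0 n0 by (simp add: field_simps)
  finally show "(?M *\<^sub>v vec (k*n) ?f) $ i = 0\<^sub>v (k*n) $ i" using i by simp
qed

lemma cycle_kernel_vec_interpolate:
  assumes n: "n \<ge> 3"
  obtains a x y where "\<And>b. cycle_kernel_vec n a x y (b*n) = P b"
    and "\<And>b. cycle_kernel_vec n a x y (b*n + 1) = Q b"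
    and "cycle_kernel_vec n a x y 2 = R"
proof -
  define s where "s = sin (2 * pi / real n)"
  define c where "c = cos (2 * pi / real n)"
  have s: "s \<noteq> 0" using sin_2pi_div_pos[OF n] by (simp add: s_def)
  have c: "2 - 2 * c \<noteq> 0" using cos_2pi_div_less_1[of n] n by (simp add: c_def)
  have "1 < n" using n by simp
  note block_div_mod[OF this, simplified]
  moreover have "sin (4 * pi / real n) = 2 * s * c"
    using sin_double[of "2 * pi / real n"] by (simp add: s_def c_def)
  ultimately have at_test: "cycle_kernel_vec n a x y (b*n) = a - y b * s"
    "cycle_kernel_vec n a x y (b*n + 1) = a + x b * s"
    "cycle_kernel_vec n a x y 2 = a + x 0 * (2 * s * c) + y 0 * s" for a x y b
    using n by (simp_all add: cycle_kernel_vec_def cycle_wave_def s_def)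
  define t where "t = (R + P 0 - 2 * c * Q 0) / (2 - 2 * c)"
  show thesis
  proof (rule that[of t "\<lambda>b. (Q b - t) / s" "\<lambda>b. (t - P b) / s"])
    show "cycle_kernel_vec n t (\<lambda>b. (Q b - t) / s) (\<lambda>b. (t - P b) / s) (b*n) = P b"
      "cycle_kernel_vec n t (\<lambda>b. (Q b - t) / s) (\<lambda>b. (t - P b) / s) (b*n + 1) = Q b" for b
      using s by (simp_all only: at_test) simp_all
    have "cycle_kernel_vec n t (\<lambda>b. (Q b - t) / s) (\<lambda>b. (t - P b) / s) 2
        = t + (Q 0 - t) / s * (2 * s * c) + (t - P 0) / s * s"
      by (simp only: at_test)
    also have "\<dots> = (2 - 2 * c) * t + 2 * c * Q 0 - P 0"
      using s by (simp add: field_simps)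
    also have "\<dots> = R" using c by (simp add: t_def)
    finally show "cycle_kernel_vec n t (\<lambda>b. (Q b - t) / s) (\<lambda>b. (t - P b) / s) 2 = R" .
  qed
qed

definition kCn_test_vertices :: "nat \<Rightarrow> nat \<Rightarrow> nat set" where
  "kCn_test_vertices k n = (\<lambda>b. b * n) ` {..<k} \<union> (\<lambda>b. b * n + 1) ` {..<k} \<union> {2}"

lemma kCn_test_vertices_subset:
  assumes "n \<ge> 3" "k \<ge> 1"
  shows "kCn_test_vertices k n \<subseteq> {..<k*n}"
proof -
  have "2 < 1 * (3::nat)" by simp
  also have "\<dots> \<le> k * n" using assms by (intro mult_le_mono)
  finally show ?thesis
    using block_less[of _ k 0 n] block_less[of _ k 1 n] assms by (auto simp: kCn_test_vertices_def)
qed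

lemma card_kCn_test_vertices:
  assumes n: "n \<ge> 3"
  shows "card (kCn_test_vertices k n) = 2 * k + 1"
proof -
  have res: "(b * n) mod n = 0" "(b * n + 1) mod n = 1" "(2::nat) mod n = 2" for b
    using n block_div_mod(2)[of 1 n b] by auto
  have mod_neq: "x \<noteq> y" if "x mod n \<noteq> y mod n" for x y :: nat using that by auto
  have ne1: "b * n \<noteq> b' * n + 1" for b b' by (rule mod_neq) (simp only: res; simp)
  have ne2: "b * n \<noteq> 2" for b by (rule mod_neq) (simp only: res; simp)
  have ne3: "b * n + 1 \<noteq> 2" for b by (rule mod_neq) (simp only: res; simp)
  have inj: "inj_on (\<lambda>b. b * n) {..<k}" "inj_on (\<lambda>b. b * n + 1) {..<k}"
    using n by (auto intro: inj_onI)
  have "card ((\<lambda>b. b * n) ` {..<k} \<union> (\<lambda>b. b * n + 1) ` {..<k}) = k + k"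
    using card_Un_disjoint[of "(\<lambda>b. b * n) ` {..<k}" "(\<lambda>b. b * n + 1) ` {..<k}"] ne1
      card_image[OF inj(1)] card_image[OF inj(2)] by auto
  moreover have "card (kCn_test_vertices k n)
      = card ((\<lambda>b. b * n) ` {..<k} \<union> (\<lambda>b. b * n + 1) ` {..<k}) + card {2::nat}"
    unfolding kCn_test_vertices_def by (rule card_Un_disjoint) (simp, simp, use ne2 ne3 in blast)
  ultimately show ?thesis by simp
qed

lemma rank_kCn_witness_mat_le:
  assumes n: "n \<ge> 3" and k: "k \<ge> 1"
  shows "vec_space.rank (k*n) (kCn_witness_mat k n) \<le> k*n - (2*k + 1)"
proof -
  let ?T = "kCn_test_vertices k n"
  have "vec_space.rank (k*n) (kCn_witness_mat k n) \<le> k*n - card ?T"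
  proof (rule vec_space.rank_le_of_kernel_indicators)
    show "kCn_witness_mat k n \<in> carrier_mat (k*n) (k*n)"
      unfolding kCn_witness_mat_def by (rule universal_adj_mat_carrier)
    show T: "?T \<subseteq> {..<k*n}" by (rule kCn_test_vertices_subset[OF n k])
    fix c assume "c \<in> ?T"
    obtain a x y where
      at_start: "\<And>b. cycle_kernel_vec n a x y (b*n) = (if b*n = c then 1 else 0)" and
      at_second: "\<And>b. cycle_kernel_vec n a x y (b*n + 1) = (if b*n + 1 = c then 1 else 0)" and
      at_two: "cycle_kernel_vec n a x y 2 = (if 2 = c then 1 else 0)"
      using cycle_kernel_vec_interpolate[OF n, where P = "\<lambda>b. if b*n = c then 1 else 0"
          and Q = "\<lambda>b. if b*n + 1 = c then 1 else 0" and R = "if 2 = c then 1 else 0"] by blast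
    let ?w = "vec (k*n) (cycle_kernel_vec n a x y)"
    have "?w $ c' = (if c' = c then 1 else 0)" if c': "c' \<in> ?T" for c'
    proof -
      from c' consider b where "c' = b*n" | b where "c' = b*n + 1" | "c' = 2"
        unfolding kCn_test_vertices_def by auto
      then have "cycle_kernel_vec n a x y c' = (if c' = c then 1 else 0)"
        by cases (simp_all only: at_start at_second at_two)
      then show ?thesis using c' T by auto
    qed
    then show "\<exists>w \<in> carrier_vec (k*n). kCn_witness_mat k n *\<^sub>v w = 0\<^sub>v (k*n)
        \<and> (\<forall>c'\<in>?T. w $ c' = (if c' = c then 1 else 0))"
      using kCn_witness_mat_kernel[OF n] by (intro bexI[of _ ?w]) auto
  qed
  then show ?thesis using card_kCn_test_vertices[OF n] by simp
qed

definition kCn_pivot :: "nat \<Rightarrow> nat \<Rightarrow> nat" where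
  "kCn_pivot n j = j div (n - 2) * n + j mod (n - 2)"

lemma
  assumes n: "n \<ge> 3" and j: "j < k * (n - 2)"
  shows kCn_pivot_less: "kCn_pivot n j + 1 < k * n"
    and kCn_pivot_mod: "kCn_pivot n j mod n = j mod (n - 2)"
proof -
  have "j div (n - 2) < k" using j n by (simp add: div_less_iff_less_mult mult.commute)
  moreover have r: "j mod (n - 2) + 1 < n" using n mod_less_divisor[of "n - 2" j] by linarith
  ultimately show "kCn_pivot n j + 1 < k * n"
    using block_less[of "j div (n - 2)" k "j mod (n - 2) + 1" n] by (simp add: kCn_pivot_def)
  show "kCn_pivot n j mod n = j mod (n - 2)" using r by (simp add: kCn_pivot_def)
qed

lemma kCn_pivot_strict_mono:
  assumes n: "n \<ge> 3"
  shows "strict_mono (kCn_pivot n)"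
proof (rule strict_monoI)
  fix j j' :: nat assume jj': "j < j'"
  have r: "j mod (n - 2) + 1 < n" using n mod_less_divisor[of "n - 2" j] by linarith
  show "kCn_pivot n j < kCn_pivot n j'"
  proof (cases "j div (n - 2) = j' div (n - 2)")
    case True
    then have "j' div (n - 2) * (n - 2) = j div (n - 2) * (n - 2)" by simp
    then have "j mod (n - 2) < j' mod (n - 2)"
      using jj' div_mult_mod_eq[of j "n - 2"] div_mult_mod_eq[of j' "n - 2"] by linarith
    then show ?thesis using True by (simp add: kCn_pivot_def)
  next
    case False
    then have "j div (n - 2) + 1 \<le> j' div (n - 2)" using jj' div_le_mono[of j j' "n - 2"] by simp
    then have "(j div (n - 2) + 1) * n \<le> j' div (n - 2) * n" by (rule mult_right_mono) simp
    then show ?thesis using r by (simp add: kCn_pivot_def)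
  qed
qed

lemma kCn_adj_pivot:
  assumes n: "n \<ge> 3" and j: "j < k * (n - 2)"
  shows "kCn_adj k n (kCn_pivot n j) (kCn_pivot n j + 1)"
proof -
  have n0: "n > 0" using n by simp
  have "kCn_pivot n j mod n + 1 < n" using n mod_less_divisor[of "n - 2" j] kCn_pivot_mod[OF n j] by linarith
  then have "cycle_succ n (kCn_pivot n j) = kCn_pivot n j + 1"
    using div_mult_mod_eq[of "kCn_pivot n j" n] by (simp add: cycle_succ_def)
  then show ?thesis
    using kCn_pivot_less[OF n j] kCn_adj_iff[OF n0, of "kCn_pivot n j" k "kCn_pivot n j + 1"] by simp
qed

lemma not_kCn_adj_pivot:
  assumes n: "n \<ge> 3" and jj': "j < j'" and j': "j' < k * (n - 2)"
  shows "\<not> kCn_adj k n (kCn_pivot n j) (kCn_pivot n j' + 1)"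
proof
  assume adj: "kCn_adj k n (kCn_pivot n j) (kCn_pivot n j' + 1)"
  have n0: "n > 0" using n by simp
  have "kCn_pivot n j < kCn_pivot n j'" using strict_monoD[OF kCn_pivot_strict_mono[OF n] jj'] .
  then have "(kCn_pivot n j' + 1) mod n = n - 1" using kCn_adj_upward[OF n0 adj] by simp
  moreover have small: "kCn_pivot n j' mod n + 1 < n - 1"
    using n mod_less_divisor[of "n - 2" j'] kCn_pivot_mod[OF n j'] by linarith
  have "(kCn_pivot n j' + 1) mod n = (kCn_pivot n j' mod n + 1) mod n"
    by (simp only: mod_add_left_eq)
  also have "\<dots> = kCn_pivot n j' mod n + 1" using small by simp
  ultimately show False using small by simp
qed

lemma rank_kCn_universal_adj_mat_no_J_ge:
  assumes n: "n \<ge> 3" and \<alpha>: "\<alpha> \<noteq> 0"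
  shows "k * (n - 2) \<le> vec_space.rank (k*n) (universal_adj_mat (k*n) (kCn_adj k n) \<alpha> \<beta> 0 \<delta>)"
proof (rule vec_space.rank_ge_of_triangular_submatrix[OF universal_adj_mat_carrier])
  let ?p = "kCn_pivot n"
  fix j assume j: "j < k * (n - 2)"
  then show "?p j < k * n \<and> ?p j + 1 < k * n" using kCn_pivot_less[OF n j] by simp
  show "universal_adj_mat (k*n) (kCn_adj k n) \<alpha> \<beta> 0 \<delta> $$ (?p j, ?p j + 1) \<noteq> 0"
    using \<alpha> kCn_pivot_less[OF n j] kCn_adj_pivot[OF n j] by (simp add: universal_adj_mat_index)
next
  let ?p = "kCn_pivot n"
  fix j j' assume jj': "j < j'" and j': "j' < k * (n - 2)"
  have "?p j < ?p j'" using strict_monoD[OF kCn_pivot_strict_mono[OF n] jj'] .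
  then show "universal_adj_mat (k*n) (kCn_adj k n) \<alpha> \<beta> 0 \<delta> $$ (?p j, ?p j' + 1) = 0"
    using kCn_pivot_less[OF n j'] not_kCn_adj_pivot[OF n jj' j']
    by (simp add: universal_adj_mat_index)
qed

lemma rank_kCn_universal_adj_mat_ge:
  assumes n: "n \<ge> 3" and \<alpha>: "\<alpha> \<noteq> 0"
  shows "k * (n - 2) \<le> vec_space.rank (k*n) (universal_adj_mat (k*n) (kCn_adj k n) \<alpha> \<beta> \<gamma> \<delta>) + 1"
proof -
  let ?N = "k*n"
  let ?U = "universal_adj_mat ?N (kCn_adj k n) \<alpha> \<beta> \<gamma> \<delta>"
  let ?J = "(- \<gamma>) \<cdot>\<^sub>m all_ones_mat ?N"
  have U: "?U \<in> carrier_mat ?N ?N" by (rule universal_adj_mat_carrier)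
  have J: "?J \<in> carrier_mat ?N ?N" by (simp add: all_ones_mat_def)
  have "universal_adj_mat ?N (kCn_adj k n) \<alpha> \<beta> 0 \<delta> = ?U + ?J"
    using U J universal_adj_mat_carrier[of ?N "kCn_adj k n" \<alpha> \<beta> 0 \<delta>]
    by (intro eq_matI) (auto simp: universal_adj_mat_index all_ones_mat_def)
  then have "vec_space.rank ?N (universal_adj_mat ?N (kCn_adj k n) \<alpha> \<beta> 0 \<delta>)
      \<le> vec_space.rank ?N ?U + vec_space.rank ?N ?J"
    using vec_space.rank_subadditive[OF U J] by simp
  moreover have "vec_space.rank ?N ?J \<le> 1"
    by (rule vec_space.rank_le_1_product_entries[OF J, where f = "\<lambda>_. - \<gamma>" and g = "\<lambda>_. 1"])
      (auto simp: all_ones_mat_def)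
  ultimately show ?thesis using rank_kCn_universal_adj_mat_no_J_ge[OF n \<alpha>, of k \<beta> \<delta>] by linarith
qed

theorem corollary12:
  fixes n k :: nat
  assumes "n \<ge> 3" and "k \<ge> 1"
  shows "int (mur (k * n) (kCn_adj k n)) = int k * int n - 2 * int k - 1"
proof -
  have "2 * k + 1 \<le> k * n" using assms mult_le_mono2[of 3 n k] by linarith
  then have r: "k * (n - 2) - 1 = k * n - (2 * k + 1)" by (simp add: diff_mult_distrib2)
  have lower: "k * n - (2 * k + 1) \<le> vec_space.rank (k*n) (universal_adj_mat (k*n) (kCn_adj k n) \<alpha> \<beta> \<gamma> \<delta>)"
    if "\<alpha> \<noteq> 0" for \<alpha> \<beta> \<gamma> \<delta>
    using rank_kCn_universal_adj_mat_ge[OF assms(1) that, of k \<beta> \<gamma> \<delta>] r by linarith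
  have "vec_space.rank (k*n) (kCn_witness_mat k n) = k * n - (2 * k + 1)"
  proof (rule le_antisym)
    show "vec_space.rank (k*n) (kCn_witness_mat k n) \<le> k * n - (2 * k + 1)"
      by (rule rank_kCn_witness_mat_le[OF assms])
    show "k * n - (2 * k + 1) \<le> vec_space.rank (k*n) (kCn_witness_mat k n)"
      unfolding kCn_witness_mat_def by (rule lower) simp
  qed
  then have "mur (k * n) (kCn_adj k n) = k * n - (2 * k + 1)"
    unfolding mur_def kCn_witness_mat_def
    by (intro Least_equality) (metis one_neq_zero, use lower in blast)
  then show ?thesis using \<open>2 * k + 1 \<le> k * n\<close> by (simp add: of_nat_diff)
qed

end
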